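(* Every endotactic reaction network is consistent.
   Context: A reaction network (E-graph) $\mathcal{G}=(\mathcal{V},\mathcal{E})$ is a finite directed graph whose nodes are distinct elements of a finite set $Y\subset\mathbb{R}^d_{\ge 0}$, with $\mathcal{V}\neq\emptyset$, every node incident to at least one edge, and no edge from a node to itself. For an edge $e$, $\mathbf{s}(e)$ is its source node, $\mathbf{t}(e)$ its target, $\mathbf{v}(e)=\mathbf{t}(e)-\mathbf{s}(e)$. $\mathcal{G}$ is consistent if there exist $a_e>0$, $e\in\mathcal{E}$, with $\sum_{e\in\mathcal{E}}a_e\mathbf{v}(e)=\mathbf{0}$. $\mathcal{G}$ is endotactic if for every $\mathbf{w}\in\mathbb{R}^d$ and $e_i\in\mathcal{E}$ with $\mathbf{w}\cdot\mathbf{v}(e_i)<0$ there exists $e_j\in\mathcal{E}$ with $\mathbf{w}\cdot(\mathbf{s}(e_j)-\mathbf{s}(e_i))<0$ and $\mathbf{w}\cdot\mathbf{v}(e_j)>0$. *)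

theory Defs
  imports "HOL-Analysis.Analysis"
begin

text \<open>The node set is the set of
  endpoints of edges, so every node is incident to an edge.\<close>

definition src :: "('a \<times> 'a) \<Rightarrow> 'a" where "src e = fst e"
definition tgt :: "('a \<times> 'a) \<Rightarrow> 'a" where "tgt e = snd e"
definition rvec :: "((real^'d) \<times> (real^'d)) \<Rightarrow> real^'d" where "rvec e = tgt e - src e"

definition nodes :: "('a \<times> 'a) set \<Rightarrow> 'a set" where
  "nodes E = fst ` E \<union> snd ` E"

definition reaction_network :: "((real^'d) \<times> (real^'d)) set \<Rightarrow> bool" where
  "reaction_network E \<longleftrightarrow> finite E \<and> nodes E \<noteq> {}
     \<and> (\<forall>y\<in>nodes E. \<forall>i. 0 \<le> y $ i)
     \<and> (\<forall>e\<in>E. src e \<noteq> tgt e)"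

definition consistent :: "((real^'d) \<times> (real^'d)) set \<Rightarrow> bool" where
  "consistent E \<longleftrightarrow> (\<exists>a :: ((real^'d) \<times> (real^'d)) \<Rightarrow> real.
      (\<forall>e\<in>E. a e > 0) \<and> (\<Sum>e\<in>E. a e *\<^sub>R rvec e) = 0)"

definition endotactic :: "((real^'d) \<times> (real^'d)) set \<Rightarrow> bool" where
  "endotactic E \<longleftrightarrow> (\<forall>w :: real^'d. \<forall>ei\<in>E. w \<bullet> rvec ei < 0 \<longrightarrow>
      (\<exists>ej\<in>E. w \<bullet> (src ej - src ei) < 0 \<and> w \<bullet> rvec ej > 0))"

end

theory Submission
  imports Defs
begin

text \<open>Consistency is a positive linear dependence among the reaction vectors. By Stiemke's
  transposition theorem such a dependence exists unless some direction w has
  w \<bullet> v(e) \<ge> 0 for all edges and > 0 for one of them. For an endotactic network, such an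
  edge gives -w \<bullet> v(e) < 0, and endotacticity then produces an edge with w \<bullet> v(e') < 0,
  which is impossible. Stiemke's theorem itself holds because, by a separation argument,
  every -v lies in the closed cone generated by the vectors.\<close>

lemma conic_hull_convex_hull_finite:
  fixes V :: "'a::real_vector set"
  assumes "finite V" "z \<in> conic hull (convex hull V)"
  obtains \<beta> where "\<forall>y\<in>V. 0 \<le> \<beta> y" "z = (\<Sum>y\<in>V. \<beta> y *\<^sub>R y)"
proof -
  obtain c x where cx: "z = c *\<^sub>R x" "0 \<le> c" "x \<in> convex hull V"
    using assms(2) by (auto simp: conic_hull_explicit)
  then obtain u where u: "\<forall>y\<in>V. 0 \<le> u y" "(\<Sum>y\<in>V. u y *\<^sub>R y) = x"
    using convex_hull_finite[OF assms(1)] by auto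
  show thesis
    using that[of "\<lambda>y. c * u y"] u cx by (auto simp: scaleR_sum_right)
qed

lemma uminus_mem_conic_hull_convex_hull:
  fixes V :: "'a::euclidean_space set"
  assumes "finite V" and "x \<in> V"
    and no_one_sided: "\<And>w. \<forall>y\<in>V. 0 \<le> w \<bullet> y \<Longrightarrow> \<forall>y\<in>V. w \<bullet> y = 0"
  shows "- x \<in> conic hull (convex hull V)"
proof (rule ccontr)
  define K where "K = conic hull (convex hull V)"
  have "closed K"
    unfolding K_def by (rule closed_conic_hull_strong) (simp add: assms(1) polytope_convex_hull)
  moreover have "convex K"
    unfolding K_def by (simp add: convex_conic_hull)
  moreover assume "- x \<notin> K"
  ultimately obtain a b where ab: "a \<bullet> (- x) < b" "\<forall>z\<in>K. b < a \<bullet> z"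
    using separating_hyperplane_closed_point by blast
  have V_sub_K: "V \<subseteq> K"
    unfolding K_def by (meson hull_subset subset_trans)
  have "conic K"
    unfolding K_def by (rule conic_conic_hull)
  have "0 \<in> K"
    using V_sub_K assms(2) \<open>conic K\<close> conic_contains_0 by blast
  then have "b < 0"
    using ab(2) by auto
  have "0 \<le> a \<bullet> y" if "y \<in> V" for y
  proof (rule ccontr)
    assume neg: "\<not> 0 \<le> a \<bullet> y"
    define c where "c = b / (a \<bullet> y)"
    have "0 \<le> c"
      unfolding c_def using neg \<open>b < 0\<close> by (simp add: divide_nonpos_neg)
    then have "c *\<^sub>R y \<in> K"
      using \<open>conic K\<close> V_sub_K that by (auto simp: conic_def)
    then have "b < a \<bullet> (c *\<^sub>R y)"
      using ab(2) by blast
    also have "\<dots> = b"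
      unfolding c_def using neg by simp
    finally show False by simp
  qed
  then have "a \<bullet> x = 0"
    using no_one_sided assms(2) by blast
  then show False
    using ab(1) \<open>b < 0\<close> by simp
qed

text \<open>Summing the representations of all -x with weight 1 added to every vector
  gives the strictly positive combination.\<close>

theorem stiemke_finite_set:
  fixes V :: "'a::euclidean_space set"
  assumes "finite V"
    and no_one_sided: "\<And>w. \<forall>y\<in>V. 0 \<le> w \<bullet> y \<Longrightarrow> \<forall>y\<in>V. w \<bullet> y = 0"
  obtains \<alpha> where "\<forall>y\<in>V. 0 < \<alpha> y" "(\<Sum>y\<in>V. \<alpha> y *\<^sub>R y) = 0"
proof -
  have "\<exists>\<beta>. (\<forall>y\<in>V. 0 \<le> \<beta> y) \<and> - x = (\<Sum>y\<in>V. \<beta> y *\<^sub>R y)" if "x \<in> V" for x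
    using conic_hull_convex_hull_finite[OF assms(1)
        uminus_mem_conic_hull_convex_hull[OF assms(1) that no_one_sided]] by metis
  then obtain \<beta> where \<beta>:
    "\<And>x. x \<in> V \<Longrightarrow> (\<forall>y\<in>V. 0 \<le> \<beta> x y) \<and> - x = (\<Sum>y\<in>V. \<beta> x y *\<^sub>R y)"
    by metis
  define \<alpha> where "\<alpha> y = 1 + (\<Sum>x\<in>V. \<beta> x y)" for y
  have \<alpha>_pos: "\<forall>y\<in>V. 0 < \<alpha> y"
    unfolding \<alpha>_def using \<beta> by (auto intro!: add_pos_nonneg sum_nonneg)
  have "(\<Sum>y\<in>V. \<alpha> y *\<^sub>R y) = (\<Sum>y\<in>V. y) + (\<Sum>y\<in>V. \<Sum>x\<in>V. \<beta> x y *\<^sub>R y)"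
    unfolding \<alpha>_def by (simp add: scaleR_add_left sum.distrib scaleR_sum_left)
  also have "(\<Sum>y\<in>V. \<Sum>x\<in>V. \<beta> x y *\<^sub>R y) = (\<Sum>x\<in>V. \<Sum>y\<in>V. \<beta> x y *\<^sub>R y)"
    by (rule sum.swap)
  also have "\<dots> = (\<Sum>x\<in>V. - x)"
    using \<beta> by (auto intro!: sum.cong)
  finally have "(\<Sum>y\<in>V. \<alpha> y *\<^sub>R y) = 0"
    by (simp add: sum_negf)
  with \<alpha>_pos show thesis
    using that by blast
qed

text \<open>Vectors repeated in the family share the weight of their common value equally.\<close>

theorem stiemke_finite_family:
  fixes f :: "'i \<Rightarrow> 'a::euclidean_space"
  assumes "finite I"
    and no_one_sided: "\<And>w. \<forall>i\<in>I. 0 \<le> w \<bullet> f i \<Longrightarrow> \<forall>i\<in>I. w \<bullet> f i = 0"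
  obtains a where "\<forall>i\<in>I. 0 < a i" "(\<Sum>i\<in>I. a i *\<^sub>R f i) = 0"
proof -
  obtain \<alpha> where \<alpha>: "\<forall>y\<in>f ` I. 0 < \<alpha> y" "(\<Sum>y\<in>f ` I. \<alpha> y *\<^sub>R y) = 0"
    using stiemke_finite_set[of "f ` I"] assms by blast
  define fiber where "fiber y = {j\<in>I. f j = y}" for y
  define n where "n y = real (card (fiber y))" for y
  have n_pos: "0 < n y" if "y \<in> f ` I" for y
    using that assms(1) by (auto simp: n_def fiber_def card_gt_0_iff)
  define a where "a i = \<alpha> (f i) / n (f i)" for i
  have a_pos: "\<forall>i\<in>I. 0 < a i"
    using \<alpha>(1) n_pos by (auto simp: a_def)
  have "(\<Sum>i\<in>I. a i *\<^sub>R f i) = (\<Sum>y\<in>f ` I. \<Sum>i\<in>fiber y. a i *\<^sub>R f i)"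
    unfolding fiber_def by (rule sum.image_gen[OF assms(1)])
  also have "\<dots> = (\<Sum>y\<in>f ` I. \<Sum>i\<in>fiber y. (\<alpha> y / n y) *\<^sub>R y)"
    by (intro sum.cong refl) (simp add: a_def fiber_def)
  also have "\<dots> = (\<Sum>y\<in>f ` I. n y *\<^sub>R ((\<alpha> y / n y) *\<^sub>R y))"
    by (simp add: n_def sum_constant_scaleR)
  also have "\<dots> = (\<Sum>y\<in>f ` I. \<alpha> y *\<^sub>R y)"
    using n_pos by (intro sum.cong refl) (simp add: less_imp_neq[symmetric])
  finally have "(\<Sum>i\<in>I. a i *\<^sub>R f i) = 0"
    using \<alpha>(2) by simp
  with a_pos show thesis
    using that by blast
qed

lemma endotactic_nonneg_imp_orthogonal:
  assumes "endotactic E" and nonneg: "\<forall>e\<in>E. 0 \<le> w \<bullet> rvec e"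
  shows "\<forall>e\<in>E. w \<bullet> rvec e = 0"
proof (rule ccontr)
  assume "\<not> (\<forall>e\<in>E. w \<bullet> rvec e = 0)"
  then obtain e where "e \<in> E" "(- w) \<bullet> rvec e < 0"
    using nonneg by force
  then obtain e' where "e' \<in> E" "(- w) \<bullet> rvec e' > 0"
    using assms(1) unfolding endotactic_def by blast
  then show False
    using nonneg by force
qed

theorem lemma5:
  fixes E :: "((real^'d) \<times> (real^'d)) set"
  assumes "reaction_network E" and "endotactic E"
  shows "consistent E"
proof -
  have "finite E"
    using assms(1) by (simp add: reaction_network_def)
  then obtain a where "\<forall>e\<in>E. 0 < a e" "(\<Sum>e\<in>E. a e *\<^sub>R rvec e) = 0"
    using stiemke_finite_family[of E rvec] endotactic_nonneg_imp_orthogonal[OF assms(2)]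
    by blast
  then show ?thesis
    unfolding consistent_def by blast
qed

end
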